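(* A pomset language $\mathcal U\subseteq\mathsf{Pom}^{\mathsf{sp}}$ is accepted by some finite pomset automaton (i.e., $\mathcal U=L_A(q)$ for some finite PA $A$ and state $q$ of $A$) if and only if $\mathcal U$ is context-free.
   Context: Fix a finite alphabet $\Sigma$. Pomsets are isomorphism classes of $\Sigma$-labelled posets; $1$ is the empty pomset, $a\in\Sigma$ the one-point pomset. $U\cdot V$ is the disjoint union with every element of $U$ below every element of $V$; $U\parallel V$ the disjoint union with no added order. $\mathsf{Pom}^{\mathsf{sp}}$ is the smallest set containing $1$ and all $a$ closed under $\cdot,\parallel$. A PA is $A=\langle Q,\delta,\gamma,F\rangle$ with $F\subseteq Q$, $\delta:Q\times\Sigma\to Q$, $\gamma:Q^3\to Q$, containing states $\bot\notin F$, $\top\in F$ with $\delta(\bot,a)=\delta(\top,a)=\bot$ and $\gamma(\bot,r,s)=\gamma(\top,r,s)=\bot$; it is finite if $Q$ is finite. Traces $\to_A\subseteq Q\times\mathsf{Pom}^{\mathsf{sp}}\times Q$: smallest relation with $q\xrightarrow{1}_A q$; $q\xrightarrow{a}_A\delta(q,a)$; $q\xrightarrow{U}_A q''\xrightarrow{V}_A q'$ implies $q\xrightarrow{U\cdot V}_A q'$; $r\xrightarrow{U}_A r'\in F$, $s\xrightarrow{V}_A s'\in F$ imply $q\xrightarrow{U\parallel V}_A\gamma(q,r,s)$. $L_A(q)=\{U:\exists q'\in F.\ q\xrightarrow{U}_A q'\}$. A context-free pomset grammar is a triple $G=\langle\Gamma,S,R\rangle$ with $\Gamma$ a finite set of non-terminals,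 $S\in\Gamma$ the start symbol, and $R$ a finite set of production rules, each a pair of a non-terminal and a term built from symbols in $\Gamma\cup\Sigma\cup\{\epsilon\}$ using binary sequential products $\cdot$ and parallel products $\parallel$. Derivations rewrite occurrences of non-terminals by right-hand sides of rules as usual, starting from $S$; a derived term containing no non-terminals denotes a series-parallel pomset (interpreting $\epsilon$ as $1$, $a$ as the primitive pomset, and $\cdot,\parallel$ as pomset compositions). $[\![G]\!]$ is the set of pomsets so derived, and a pomset language is context-free if it equals $[\![G]\!]$ for some such $G$. *)

theory Defs
  imports Main
begin

text \<open>A labelled poset is represented by a carrier (a finite set of naturals),
  an order relation on it, and a labelling function (relevant only on the carrier).\<close>

type_synonym 'a lposet = "nat set \<times> (nat \<times> nat) set \<times> (nat \<Rightarrow> 'a)"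

definition lposet_wf :: "'a lposet \<Rightarrow> bool" where
  "lposet_wf P = (case P of (C, R, l) \<Rightarrow>
     finite C \<and> R \<subseteq> C \<times> C \<and> refl_on C R \<and> antisym R \<and> trans R)"

definition lposet_iso :: "'a lposet \<Rightarrow> 'a lposet \<Rightarrow> bool" where
  "lposet_iso P Q = (case P of (C1, R1, l1) \<Rightarrow> case Q of (C2, R2, l2) \<Rightarrow>
     (\<exists>f. bij_betw f C1 C2 \<and>
          (\<forall>x\<in>C1. \<forall>y\<in>C1. (x, y) \<in> R1 \<longleftrightarrow> (f x, f y) \<in> R2) \<and>
          (\<forall>x\<in>C1. l2 (f x) = l1 x)))"

typedef 'a pomset =
  "{K :: 'a lposet set. \<exists>P. lposet_wf P \<and> K = {Q. lposet_wf Q \<and> lposet_iso P Q}}"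
proof -
  have "lposet_wf ({}, {}, \<lambda>_. undefined)"
    by (simp add: lposet_wf_def refl_on_def antisym_def trans_def)
  then show ?thesis by blast
qed

definition pom_of :: "'a lposet \<Rightarrow> 'a pomset" where
  "pom_of P = Abs_pomset {Q. lposet_wf Q \<and> lposet_iso P Q}"

definition pom_rep :: "'a pomset \<Rightarrow> 'a lposet" where
  "pom_rep U = (SOME P. P \<in> Rep_pomset U)"

text \<open>Disjoint union: left part tagged by even numbers, right part by odd numbers.\<close>

definition lposet_seq :: "'a lposet \<Rightarrow> 'a lposet \<Rightarrow> 'a lposet" where
  "lposet_seq P Q = (case P of (C1, R1, l1) \<Rightarrow> case Q of (C2, R2, l2) \<Rightarrow>
     ((\<lambda>x. 2 * x) ` C1 \<union> (\<lambda>x. 2 * x + 1) ` C2,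
      (\<lambda>(x, y). (2 * x, 2 * y)) ` R1 \<union> (\<lambda>(x, y). (2 * x + 1, 2 * y + 1)) ` R2
        \<union> ((\<lambda>x. 2 * x) ` C1) \<times> ((\<lambda>x. 2 * x + 1) ` C2),
      (\<lambda>n. if even n then l1 (n div 2) else l2 (n div 2))))"

definition lposet_par :: "'a lposet \<Rightarrow> 'a lposet \<Rightarrow> 'a lposet" where
  "lposet_par P Q = (case P of (C1, R1, l1) \<Rightarrow> case Q of (C2, R2, l2) \<Rightarrow>
     ((\<lambda>x. 2 * x) ` C1 \<union> (\<lambda>x. 2 * x + 1) ` C2,
      (\<lambda>(x, y). (2 * x, 2 * y)) ` R1 \<union> (\<lambda>(x, y). (2 * x + 1, 2 * y + 1)) ` R2,
      (\<lambda>n. if even n then l1 (n div 2) else l2 (n div 2))))"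

definition pom_one :: "'a pomset" where
  "pom_one = pom_of ({}, {}, \<lambda>_. undefined)"

definition pom_prim :: "'a \<Rightarrow> 'a pomset" where
  "pom_prim a = pom_of ({0}, {(0, 0)}, \<lambda>_. a)"

definition pom_seq :: "'a pomset \<Rightarrow> 'a pomset \<Rightarrow> 'a pomset" where
  "pom_seq U V = pom_of (lposet_seq (pom_rep U) (pom_rep V))"

definition pom_par :: "'a pomset \<Rightarrow> 'a pomset \<Rightarrow> 'a pomset" where
  "pom_par U V = pom_of (lposet_par (pom_rep U) (pom_rep V))"

inductive_set sp_pomsets :: "'a pomset set" where
  sp_one: "pom_one \<in> sp_pomsets"
| sp_prim: "pom_prim a \<in> sp_pomsets"
| sp_seq: "U \<in> sp_pomsets \<Longrightarrow> V \<in> sp_pomsets \<Longrightarrow> pom_seq U V \<in> sp_pomsets"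
| sp_par: "U \<in> sp_pomsets \<Longrightarrow> V \<in> sp_pomsets \<Longrightarrow> pom_par U V \<in> sp_pomsets"

record 'a pa =
  pa_states :: "nat set"
  pa_delta  :: "nat \<Rightarrow> 'a \<Rightarrow> nat"
  pa_gamma  :: "nat \<Rightarrow> nat \<Rightarrow> nat \<Rightarrow> nat"
  pa_final  :: "nat set"
  pa_bot    :: nat
  pa_top    :: nat

definition is_pa :: "'a pa \<Rightarrow> bool" where
  "is_pa A \<longleftrightarrow>
     pa_final A \<subseteq> pa_states A \<and>
     (\<forall>q\<in>pa_states A. \<forall>a. pa_delta A q a \<in> pa_states A) \<and>
     (\<forall>q\<in>pa_states A. \<forall>r\<in>pa_states A. \<forall>s\<in>pa_states A. pa_gamma A q r s \<in> pa_states A) \<and>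
     pa_bot A \<in> pa_states A \<and> pa_top A \<in> pa_states A \<and>
     pa_bot A \<notin> pa_final A \<and> pa_top A \<in> pa_final A \<and>
     (\<forall>a. pa_delta A (pa_bot A) a = pa_bot A \<and> pa_delta A (pa_top A) a = pa_bot A) \<and>
     (\<forall>r\<in>pa_states A. \<forall>s\<in>pa_states A.
        pa_gamma A (pa_bot A) r s = pa_bot A \<and> pa_gamma A (pa_top A) r s = pa_bot A)"

definition finite_pa :: "'a pa \<Rightarrow> bool" where
  "finite_pa A \<longleftrightarrow> is_pa A \<and> finite (pa_states A)"

inductive pa_trace :: "'a pa \<Rightarrow> nat \<Rightarrow> 'a pomset \<Rightarrow> nat \<Rightarrow> bool" for A where
  tr_one: "q \<in> pa_states A \<Longrightarrow> pa_trace A q pom_one q"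
| tr_prim: "q \<in> pa_states A \<Longrightarrow> pa_trace A q (pom_prim a) (pa_delta A q a)"
| tr_seq: "pa_trace A q U q'' \<Longrightarrow> pa_trace A q'' V q' \<Longrightarrow> pa_trace A q (pom_seq U V) q'"
| tr_par: "q \<in> pa_states A \<Longrightarrow> pa_trace A r U r' \<Longrightarrow> r' \<in> pa_final A \<Longrightarrow>
           pa_trace A s V s' \<Longrightarrow> s' \<in> pa_final A \<Longrightarrow>
           pa_trace A q (pom_par U V) (pa_gamma A q r s)"

definition pa_lang :: "'a pa \<Rightarrow> nat \<Rightarrow> 'a pomset set" where
  "pa_lang A q = {U. \<exists>q'\<in>pa_final A. pa_trace A q U q'}"

datatype ('a, 'n) gterm =
    NT 'n
  | Term 'a
  | Eps
  | GSeq "('a, 'n) gterm" "('a, 'n) gterm"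
  | GPar "('a, 'n) gterm" "('a, 'n) gterm"

fun nts :: "('a, 'n) gterm \<Rightarrow> 'n set" where
  "nts (NT X) = {X}"
| "nts (Term a) = {}"
| "nts Eps = {}"
| "nts (GSeq s t) = nts s \<union> nts t"
| "nts (GPar s t) = nts s \<union> nts t"

fun gterm_sem :: "('a, 'n) gterm \<Rightarrow> 'a pomset" where
  "gterm_sem (NT X) = undefined"
| "gterm_sem (Term a) = pom_prim a"
| "gterm_sem Eps = pom_one"
| "gterm_sem (GSeq s t) = pom_seq (gterm_sem s) (gterm_sem t)"
| "gterm_sem (GPar s t) = pom_par (gterm_sem s) (gterm_sem t)"

text \<open>A grammar: non-terminals (finite set of naturals), start symbol, finite set of rules.\<close>

type_synonym 'a grammar = "nat set \<times> nat \<times> (nat \<times> ('a, nat) gterm) set"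

definition is_grammar :: "'a grammar \<Rightarrow> bool" where
  "is_grammar G = (case G of (\<Gamma>, S, R) \<Rightarrow>
     finite \<Gamma> \<and> S \<in> \<Gamma> \<and> finite R \<and> (\<forall>(X, t)\<in>R. X \<in> \<Gamma> \<and> nts t \<subseteq> \<Gamma>))"

inductive gstep :: "(nat \<times> ('a, nat) gterm) set \<Rightarrow> ('a, nat) gterm \<Rightarrow> ('a, nat) gterm \<Rightarrow> bool"
  for R where
  step_rule: "(X, t) \<in> R \<Longrightarrow> gstep R (NT X) t"
| step_seqL: "gstep R s s' \<Longrightarrow> gstep R (GSeq s t) (GSeq s' t)"
| step_seqR: "gstep R t t' \<Longrightarrow> gstep R (GSeq s t) (GSeq s t')"
| step_parL: "gstep R s s' \<Longrightarrow> gstep R (GPar s t) (GPar s' t)"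
| step_parR: "gstep R t t' \<Longrightarrow> gstep R (GPar s t) (GPar s t')"

definition grammar_lang :: "'a grammar \<Rightarrow> 'a pomset set" where
  "grammar_lang G = (case G of (\<Gamma>, S, R) \<Rightarrow>
     {gterm_sem t | t. (gstep R)\<^sup>*\<^sup>* (NT S) t \<and> nts t = {}})"

definition context_free :: "'a pomset set \<Rightarrow> bool" where
  "context_free L \<longleftrightarrow> (\<exists>G. is_grammar G \<and> L = grammar_lang G)"

end

theory Submission
  imports Defs "HOL-Library.Countable"
begin

text \<open>
  From an automaton to a grammar: the non-terminal \<open>\<langle>p, p'\<rangle>\<close> generates exactly the pomsets
  \<open>U\<close> with \<open>p \<midarrow>U\<rightarrow> p'\<close>, its rules mirroring the four trace rules, and the start symbol picks
  an accepting target state.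

  From a grammar to an automaton: states are stacks of grammar terms that remain to be
  derived, processed top-down as by a recursive-descent parser. A letter pops a matching
  terminal; every other head is consumed by a fork, which for \<open>t\<^sub>1 \<parallel> t\<^sub>2\<close> spawns sub-runs on
  \<open>[t\<^sub>1]\<close> and \<open>[t\<^sub>2]\<close>. Sub-runs start from single subterms of the grammar and stacks never
  grow in total size, so only finitely many states are needed. Both constructions only use
  that pomsets form a monoid under \<open>\<cdot>\<close> whose unit \<open>1\<close> is also a unit for \<open>\<parallel>\<close>.
\<close>

section \<open>Labelled posets up to isomorphism\<close>

lemma lposet_wf_iff:
  "lposet_wf (C, R, l) \<longleftrightarrow> finite C \<and> R \<subseteq> C \<times> C \<and> refl_on C R \<and> antisym R \<and> trans R"
  by (simp add: lposet_wf_def)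

lemma lposet_iso_iff:
  "lposet_iso (C1, R1, l1) (C2, R2, l2) \<longleftrightarrow>
   (\<exists>f. bij_betw f C1 C2 \<and> (\<forall>x\<in>C1. \<forall>y\<in>C1. (x, y) \<in> R1 \<longleftrightarrow> (f x, f y) \<in> R2) \<and>
        (\<forall>x\<in>C1. l2 (f x) = l1 x))"
  by (simp add: lposet_iso_def)

lemma lposet_iso_refl: "lposet_iso P P"
  by (cases P) (auto simp: lposet_iso_iff intro: exI[of _ id])

lemma lposet_iso_sym:
  assumes "lposet_iso P Q"
  shows "lposet_iso Q P"
proof -
  obtain C1 R1 l1 C2 R2 l2 where P: "P = (C1, R1, l1)" and Q: "Q = (C2, R2, l2)"
    by (cases P, cases Q) auto
  obtain f where f: "bij_betw f C1 C2" "\<forall>x\<in>C1. \<forall>y\<in>C1. (x, y) \<in> R1 \<longleftrightarrow> (f x, f y) \<in> R2"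
    "\<forall>x\<in>C1. l2 (f x) = l1 x"
    using assms unfolding P Q lposet_iso_iff by blast
  let ?g = "inv_into C1 f"
  have "?g x \<in> C1" "f (?g x) = x" if "x \<in> C2" for x
    using f(1) that by (auto simp: bij_betw_def)
  then show ?thesis
    unfolding P Q lposet_iso_iff using f bij_betw_inv_into[OF f(1)]
    by (intro exI[of _ ?g]) metis
qed

lemma lposet_iso_trans:
  assumes "lposet_iso P Q" "lposet_iso Q S"
  shows "lposet_iso P S"
proof -
  obtain C1 R1 l1 C2 R2 l2 C3 R3 l3 where P: "P = (C1, R1, l1)" and Q: "Q = (C2, R2, l2)"
    and S: "S = (C3, R3, l3)"
    by (cases P, cases Q, cases S) auto
  obtain f where f: "bij_betw f C1 C2" "\<forall>x\<in>C1. \<forall>y\<in>C1. (x, y) \<in> R1 \<longleftrightarrow> (f x, f y) \<in> R2"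
    "\<forall>x\<in>C1. l2 (f x) = l1 x"
    using assms(1) unfolding P Q lposet_iso_iff by blast
  obtain g where g: "bij_betw g C2 C3" "\<forall>x\<in>C2. \<forall>y\<in>C2. (x, y) \<in> R2 \<longleftrightarrow> (g x, g y) \<in> R3"
    "\<forall>x\<in>C2. l3 (g x) = l2 x"
    using assms(2) unfolding Q S lposet_iso_iff by blast
  have "f x \<in> C2" if "x \<in> C1" for x using f(1) that by (rule bij_betw_apply)
  then show ?thesis
    unfolding P S lposet_iso_iff using f g bij_betw_trans[OF f(1) g(1)]
    by (intro exI[of _ "g \<circ> f"]) simp
qed

lemma lposet_iso_map:
  assumes "inj f" "R \<subseteq> C \<times> C" "\<And>x. l' (f x) = l x"
  shows "lposet_iso (C, R, l) (f ` C, map_prod f f ` R, l')"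
  unfolding lposet_iso_iff using assms
  by (intro exI[of _ f]) (auto simp: inj_on_subset[OF assms(1)] inj_on_imp_bij_betw inj_eq)

lemma pom_of_eqI: "lposet_iso P Q \<Longrightarrow> pom_of P = pom_of Q"
  unfolding pom_of_def by (metis lposet_iso_sym lposet_iso_trans)

lemma lposet_iso_pom_rep_pom_of:
  assumes "lposet_wf P"
  shows "lposet_iso P (pom_rep (pom_of P))"
proof -
  have "Rep_pomset (pom_of P) = {Q. lposet_wf Q \<and> lposet_iso P Q}"
    unfolding pom_of_def using assms by (intro Abs_pomset_inverse) blast
  moreover have "P \<in> Rep_pomset (pom_of P)"
    using calculation assms lposet_iso_refl by blast
  ultimately show ?thesis
    unfolding pom_rep_def by (metis (mono_tags, lifting) mem_Collect_eq someI)
qed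

lemma pomset_cases:
  obtains P where "lposet_wf P" "U = pom_of P"
proof -
  obtain P where "lposet_wf P" "Rep_pomset U = {Q. lposet_wf Q \<and> lposet_iso P Q}"
    using Rep_pomset[of U] by blast
  then show thesis
    using that by (metis Rep_pomset_inverse pom_of_def)
qed

section \<open>Sequential and parallel composition\<close>

definition tag_left :: "nat \<Rightarrow> nat" where "tag_left x = 2 * x"
definition tag_right :: "nat \<Rightarrow> nat" where "tag_right x = 2 * x + 1"

definition join_labels :: "(nat \<Rightarrow> 'a) \<Rightarrow> (nat \<Rightarrow> 'a) \<Rightarrow> nat \<Rightarrow> 'a" where
  "join_labels l1 l2 n = (if even n then l1 (n div 2) else l2 (n div 2))"

lemma inj_tag_left: "inj tag_left" and inj_tag_right: "inj tag_right"
  by (simp_all add: inj_def tag_left_def tag_right_def)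

lemma tag_left_eq_iff [simp]: "tag_left a = tag_left b \<longleftrightarrow> a = b"
  and tag_right_eq_iff [simp]: "tag_right a = tag_right b \<longleftrightarrow> a = b"
  and tag_left_neq_tag_right [simp]: "tag_left a \<noteq> tag_right b" "tag_right b \<noteq> tag_left a"
  by (simp_all add: tag_left_def tag_right_def) presburger+

lemma join_labels_tag [simp]:
  "join_labels l1 l2 (tag_left a) = l1 a" "join_labels l1 l2 (tag_right a) = l2 a"
  by (simp_all add: join_labels_def tag_left_def tag_right_def)

lemma tag_image_iff [simp]:
  "tag_left a \<in> tag_left ` C \<longleftrightarrow> a \<in> C" "tag_right a \<in> tag_right ` C \<longleftrightarrow> a \<in> C"
  "tag_left a \<notin> tag_right ` C" "tag_right a \<notin> tag_left ` C"
  by auto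

lemma tag_pair_image_iff [simp]:
  "(tag_left a, tag_left b) \<in> map_prod tag_left tag_left ` R \<longleftrightarrow> (a, b) \<in> R"
  "(tag_right a, tag_right b) \<in> map_prod tag_right tag_right ` R \<longleftrightarrow> (a, b) \<in> R"
  "(tag_left a, y) \<notin> map_prod tag_right tag_right ` R" "(tag_right a, y) \<notin> map_prod tag_left tag_left ` R"
  "(x, tag_left b) \<notin> map_prod tag_right tag_right ` R" "(x, tag_right b) \<notin> map_prod tag_left tag_left ` R"
  by auto

definition lposet_glue :: "bool \<Rightarrow> 'a lposet \<Rightarrow> 'a lposet \<Rightarrow> 'a lposet" where
  "lposet_glue seq P Q = (case P of (C1, R1, l1) \<Rightarrow> case Q of (C2, R2, l2) \<Rightarrow>
     (tag_left ` C1 \<union> tag_right ` C2,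
      map_prod tag_left tag_left ` R1 \<union> map_prod tag_right tag_right ` R2
        \<union> (if seq then tag_left ` C1 \<times> tag_right ` C2 else {}),
      join_labels l1 l2))"

lemma lposet_seq_glue: "lposet_seq = lposet_glue True"
  and lposet_par_glue: "lposet_par = lposet_glue False"
  by (simp_all add: fun_eq_iff lposet_seq_def lposet_par_def lposet_glue_def tag_left_def
      tag_right_def join_labels_def map_prod_def case_prod_beta')

lemma lposet_wf_glue:
  assumes "lposet_wf P" "lposet_wf Q"
  shows "lposet_wf (lposet_glue seq P Q)"
proof -
  obtain C1 R1 l1 C2 R2 l2 where P: "P = (C1, R1, l1)" and Q: "Q = (C2, R2, l2)"
    by (cases P, cases Q) auto
  have 1: "finite C1" "R1 \<subseteq> C1 \<times> C1" "refl_on C1 R1" "antisym R1" "trans R1"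
   and 2: "finite C2" "R2 \<subseteq> C2 \<times> C2" "refl_on C2 R2" "antisym R2" "trans R2"
    using assms by (auto simp: P Q lposet_wf_iff)
  show ?thesis
    unfolding P Q lposet_glue_def lposet_wf_iff prod.case
  proof (intro conjI)
    show "antisym (map_prod tag_left tag_left ` R1 \<union> map_prod tag_right tag_right ` R2
        \<union> (if seq then tag_left ` C1 \<times> tag_right ` C2 else {}))"
      using 1(4) 2(4) unfolding antisym_def by auto
    show "trans (map_prod tag_left tag_left ` R1 \<union> map_prod tag_right tag_right ` R2
        \<union> (if seq then tag_left ` C1 \<times> tag_right ` C2 else {}))"
      using 1(2,5) 2(2,5) unfolding trans_def by (cases seq) fastforce+
  qed (use 1 2 in \<open>auto simp: refl_on_def\<close>)
qed

definition tag_map :: "(nat \<Rightarrow> nat) \<Rightarrow> (nat \<Rightarrow> nat) \<Rightarrow> nat \<Rightarrow> nat" where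
  "tag_map f g n = (if even n then tag_left (f (n div 2)) else tag_right (g (n div 2)))"

lemma tag_map_tag [simp]:
  "tag_map f g (tag_left a) = tag_left (f a)" "tag_map f g (tag_right a) = tag_right (g a)"
  by (simp_all add: tag_map_def tag_left_def tag_right_def)

lemma bij_betw_tag_map:
  assumes "bij_betw f C1 C1'" "bij_betw g C2 C2'"
  shows "bij_betw (tag_map f g) (tag_left ` C1 \<union> tag_right ` C2) (tag_left ` C1' \<union> tag_right ` C2')"
proof (rule bij_betw_imageI)
  have f: "inj_on f C1" and g: "inj_on g C2" using assms by (simp_all add: bij_betw_def)
  show "inj_on (tag_map f g) (tag_left ` C1 \<union> tag_right ` C2)"
    by (rule inj_onI) (auto dest: inj_onD[OF f] inj_onD[OF g])
  have "tag_map f g ` (tag_left ` C1 \<union> tag_right ` C2) = tag_left ` f ` C1 \<union> tag_right ` g ` C2"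
    by (simp add: image_Un image_image)
  then show "tag_map f g ` (tag_left ` C1 \<union> tag_right ` C2) = tag_left ` C1' \<union> tag_right ` C2'"
    using assms by (simp add: bij_betw_def)
qed

lemma lposet_iso_glue:
  assumes "lposet_iso P P'" "lposet_iso Q Q'"
  shows "lposet_iso (lposet_glue seq P Q) (lposet_glue seq P' Q')"
proof -
  obtain C1 R1 l1 C2 R2 l2 where P: "P = (C1, R1, l1)" and Q: "Q = (C2, R2, l2)"
    by (cases P, cases Q) auto
  obtain C1' R1' l1' C2' R2' l2' where P': "P' = (C1', R1', l1')" and Q': "Q' = (C2', R2', l2')"
    by (cases P', cases Q') auto
  obtain f where f: "bij_betw f C1 C1'" "\<forall>x\<in>C1. \<forall>y\<in>C1. (x, y) \<in> R1 \<longleftrightarrow> (f x, f y) \<in> R1'"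
    "\<forall>x\<in>C1. l1' (f x) = l1 x"
    using assms(1) unfolding P P' lposet_iso_iff by blast
  obtain g where g: "bij_betw g C2 C2'" "\<forall>x\<in>C2. \<forall>y\<in>C2. (x, y) \<in> R2 \<longleftrightarrow> (g x, g y) \<in> R2'"
    "\<forall>x\<in>C2. l2' (g x) = l2 x"
    using assms(2) unfolding Q Q' lposet_iso_iff by blast
  have "f x \<in> C1'" if "x \<in> C1" for x using f(1) that by (rule bij_betw_apply)
  moreover have "g x \<in> C2'" if "x \<in> C2" for x using g(1) that by (rule bij_betw_apply)
  ultimately show ?thesis
    unfolding P Q P' Q' lposet_glue_def lposet_iso_iff prod.case
    using f g bij_betw_tag_map[OF f(1) g(1)]
    by (intro exI[of _ "tag_map f g"]) (auto split: if_splits)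
qed

lemma pom_glue_pom_of:
  assumes "lposet_wf P" "lposet_wf Q"
  shows "pom_of (lposet_glue seq (pom_rep (pom_of P)) (pom_rep (pom_of Q))) = pom_of (lposet_glue seq P Q)"
  using assms by (metis lposet_iso_glue lposet_iso_pom_rep_pom_of lposet_iso_sym pom_of_eqI)

lemma pom_seq_pom_of:
  "lposet_wf P \<Longrightarrow> lposet_wf Q \<Longrightarrow> pom_seq (pom_of P) (pom_of Q) = pom_of (lposet_seq P Q)"
  unfolding pom_seq_def lposet_seq_glue by (rule pom_glue_pom_of)

lemma pom_par_pom_of:
  "lposet_wf P \<Longrightarrow> lposet_wf Q \<Longrightarrow> pom_par (pom_of P) (pom_of Q) = pom_of (lposet_par P Q)"
  unfolding pom_par_def lposet_par_glue by (rule pom_glue_pom_of)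

definition lposet_empty :: "'a lposet" where
  "lposet_empty = ({}, {}, \<lambda>_. undefined)"

lemma lposet_wf_empty: "lposet_wf lposet_empty"
  by (simp add: lposet_empty_def lposet_wf_iff)

lemma pom_one_eq: "pom_one = pom_of lposet_empty"
  by (simp add: pom_one_def lposet_empty_def)

lemma lposet_iso_glue_empty:
  assumes "lposet_wf P"
  shows "lposet_iso P (lposet_glue seq lposet_empty P)" "lposet_iso P (lposet_glue seq P lposet_empty)"
proof -
  obtain C R l where P: "P = (C, R, l)" by (cases P) auto
  have "R \<subseteq> C \<times> C" using assms by (simp add: P lposet_wf_iff)
  then show "lposet_iso P (lposet_glue seq lposet_empty P)" "lposet_iso P (lposet_glue seq P lposet_empty)"
    unfolding P lposet_glue_def lposet_empty_def
    by (simp_all add: lposet_iso_map inj_tag_left inj_tag_right)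
qed

lemma pom_seq_one_left: "pom_seq pom_one U = U"
  and pom_seq_one_right: "pom_seq U pom_one = U"
  and pom_par_one_right: "pom_par U pom_one = U"
proof -
  obtain P where P: "lposet_wf P" "U = pom_of P" by (rule pomset_cases)
  then show "pom_seq pom_one U = U" "pom_seq U pom_one = U" "pom_par U pom_one = U"
    by (simp_all add: pom_one_eq pom_seq_pom_of pom_par_pom_of lposet_wf_empty lposet_seq_glue
        lposet_par_glue pom_of_eqI[OF lposet_iso_sym] lposet_iso_glue_empty)
qed

text \<open>The bijection underlying associativity: \<open>(P \<cdot> Q) \<cdot> S\<close> tags the elements of
  \<open>P, Q, S\<close> by \<open>4n, 4n + 2, 2n + 1\<close>, and \<open>P \<cdot> (Q \<cdot> S)\<close> by \<open>2n, 4n + 1, 4n + 3\<close>.\<close>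

definition seq_reassoc :: "nat \<Rightarrow> nat" where
  "seq_reassoc n = (if odd n then tag_right (tag_right (n div 2))
     else if even (n div 2) then tag_left (n div 4) else tag_right (tag_left (n div 4)))"

lemma seq_reassoc_tag [simp]:
  "seq_reassoc (tag_left (tag_left a)) = tag_left a"
  "seq_reassoc (tag_left (tag_right a)) = tag_right (tag_left a)"
  "seq_reassoc (tag_right a) = tag_right (tag_right a)"
  by (simp_all add: seq_reassoc_def tag_left_def tag_right_def)

lemma lposet_iso_seq_assoc:
  "lposet_iso (lposet_seq (lposet_seq P Q) S) (lposet_seq P (lposet_seq Q S))"
proof -
  obtain C1 R1 l1 C2 R2 l2 C3 R3 l3 where P: "P = (C1, R1, l1)" and Q: "Q = (C2, R2, l2)"
    and S: "S = (C3, R3, l3)"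
    by (cases P, cases Q, cases S) auto
  let ?C = "tag_left ` (tag_left ` C1 \<union> tag_right ` C2) \<union> tag_right ` C3"
  have bij: "bij_betw seq_reassoc ?C (tag_left ` C1 \<union> tag_right ` (tag_left ` C2 \<union> tag_right ` C3))"
    unfolding bij_betw_def inj_on_def by (auto simp: image_Un image_image)
  have tagged_cases: "(\<exists>a\<in>C1. x = tag_left (tag_left a)) \<or> (\<exists>a\<in>C2. x = tag_left (tag_right a))
      \<or> (\<exists>a\<in>C3. x = tag_right a)" if "x \<in> ?C" for x
    using that by blast
  show ?thesis
    unfolding P Q S lposet_seq_glue lposet_glue_def lposet_iso_iff prod.case if_True
    by (intro exI[of _ seq_reassoc] conjI ballI bij; elim tagged_cases[elim_format] disjE bexE) auto
qed

lemma pom_seq_assoc: "pom_seq (pom_seq U V) W = pom_seq U (pom_seq V W)"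
proof -
  obtain P Q S where "lposet_wf P" "U = pom_of P" "lposet_wf Q" "V = pom_of Q"
    "lposet_wf S" "W = pom_of S"
    by (metis pomset_cases)
  then show ?thesis
    by (simp add: pom_seq_pom_of lposet_seq_glue lposet_wf_glue pom_of_eqI
        lposet_iso_seq_assoc[unfolded lposet_seq_glue])
qed

section \<open>Derivations of context-free pomset grammars\<close>

inductive generates :: "(nat \<times> ('a, nat) gterm) set \<Rightarrow> ('a, nat) gterm \<Rightarrow> 'a pomset \<Rightarrow> bool"
  for R where
  generates_Term: "generates R (Term a) (pom_prim a)"
| generates_Eps: "generates R Eps pom_one"
| generates_GSeq: "generates R s U \<Longrightarrow> generates R t V \<Longrightarrow> generates R (GSeq s t) (pom_seq U V)"
| generates_GPar: "generates R s U \<Longrightarrow> generates R t V \<Longrightarrow> generates R (GPar s t) (pom_par U V)"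
| generates_NT: "(X, t) \<in> R \<Longrightarrow> generates R t U \<Longrightarrow> generates R (NT X) U"

lemma generates_gterm_sem: "nts t = {} \<Longrightarrow> generates R t (gterm_sem t)"
  by (induction t) (auto intro: generates.intros)

lemma generates_gstep: "gstep R s s' \<Longrightarrow> generates R s' U \<Longrightarrow> generates R s U"
proof (induction arbitrary: U rule: gstep.induct)
  case (step_rule X t)
  then show ?case by (rule generates_NT)
next
  case (step_seqL s s' t)
  from step_seqL.prems show ?case
    by (cases rule: generates.cases) (auto intro: generates.intros step_seqL.IH)
next
  case (step_seqR t t' s)
  from step_seqR.prems show ?case
    by (cases rule: generates.cases) (auto intro: generates.intros step_seqR.IH)
next
  case (step_parL s s' t)
  from step_parL.prems show ?case
    by (cases rule: generates.cases) (auto intro: generates.intros step_parL.IH)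
next
  case (step_parR t t' s)
  from step_parR.prems show ?case
    by (cases rule: generates.cases) (auto intro: generates.intros step_parR.IH)
qed

lemma generates_gsteps: "(gstep R)\<^sup>*\<^sup>* s t \<Longrightarrow> generates R t U \<Longrightarrow> generates R s U"
  by (induction rule: converse_rtranclp_induct) (auto intro: generates_gstep)

lemma gsteps_GSeq:
  assumes "(gstep R)\<^sup>*\<^sup>* s s'" "(gstep R)\<^sup>*\<^sup>* t t'"
  shows "(gstep R)\<^sup>*\<^sup>* (GSeq s t) (GSeq s' t')"
proof -
  have "(gstep R)\<^sup>*\<^sup>* (GSeq s t) (GSeq s' t)"
    using assms(1) by induction (auto intro: rtranclp.rtrancl_into_rtrancl step_seqL)
  also have "(gstep R)\<^sup>*\<^sup>* (GSeq s' t) (GSeq s' t')"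
    using assms(2) by induction (auto intro: rtranclp.rtrancl_into_rtrancl step_seqR)
  finally show ?thesis .
qed

lemma gsteps_GPar:
  assumes "(gstep R)\<^sup>*\<^sup>* s s'" "(gstep R)\<^sup>*\<^sup>* t t'"
  shows "(gstep R)\<^sup>*\<^sup>* (GPar s t) (GPar s' t')"
proof -
  have "(gstep R)\<^sup>*\<^sup>* (GPar s t) (GPar s' t)"
    using assms(1) by induction (auto intro: rtranclp.rtrancl_into_rtrancl step_parL)
  also have "(gstep R)\<^sup>*\<^sup>* (GPar s' t) (GPar s' t')"
    using assms(2) by induction (auto intro: rtranclp.rtrancl_into_rtrancl step_parR)
  finally show ?thesis .
qed

lemma generates_imp_gsteps:
  "generates R s U \<Longrightarrow> \<exists>t. (gstep R)\<^sup>*\<^sup>* s t \<and> nts t = {} \<and> gterm_sem t = U"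
proof (induction rule: generates.induct)
  case (generates_Term a)
  then show ?case by (intro exI[of _ "Term a"]) auto
next
  case generates_Eps
  then show ?case by (intro exI[of _ Eps]) auto
next
  case (generates_GSeq s U t V)
  then obtain s' t' where "(gstep R)\<^sup>*\<^sup>* s s'" "nts s' = {}" "gterm_sem s' = U"
    "(gstep R)\<^sup>*\<^sup>* t t'" "nts t' = {}" "gterm_sem t' = V" by blast
  then show ?case by (intro exI[of _ "GSeq s' t'"]) (auto intro: gsteps_GSeq)
next
  case (generates_GPar s U t V)
  then obtain s' t' where "(gstep R)\<^sup>*\<^sup>* s s'" "nts s' = {}" "gterm_sem s' = U"
    "(gstep R)\<^sup>*\<^sup>* t t'" "nts t' = {}" "gterm_sem t' = V" by blast
  then show ?case by (intro exI[of _ "GPar s' t'"]) (auto intro: gsteps_GPar)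
next
  case (generates_NT X t U)
  then show ?case by (blast intro: converse_rtranclp_into_rtranclp step_rule)
qed

lemma grammar_lang_eq: "grammar_lang (\<Gamma>, S, R) = {U. generates R (NT S) U}"
  unfolding grammar_lang_def
  using generates_imp_gsteps generates_gsteps generates_gterm_sem by fastforce

section \<open>From pomset automata to grammars\<close>

lemma pa_trace_states: "pa_trace A p U p' \<Longrightarrow> is_pa A \<Longrightarrow> p \<in> pa_states A \<and> p' \<in> pa_states A"
  by (induction rule: pa_trace.induct) (auto simp: is_pa_def)

definition pair_nt :: "nat \<Rightarrow> nat \<Rightarrow> nat" where
  "pair_nt p p' = Suc (prod_encode (p, p'))"

lemma pair_nt_eq_iff [simp]: "pair_nt p p' = pair_nt r r' \<longleftrightarrow> p = r \<and> p' = r'"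
  and pair_nt_neq_zero [simp]: "pair_nt p p' \<noteq> 0"
  by (auto simp: pair_nt_def prod_encode_eq)

inductive_set pa_rules :: "'a pa \<Rightarrow> nat \<Rightarrow> (nat \<times> ('a, nat) gterm) set" for A q where
  pa_rule_one: "p \<in> pa_states A \<Longrightarrow> (pair_nt p p, Eps) \<in> pa_rules A q"
| pa_rule_prim: "p \<in> pa_states A \<Longrightarrow> (pair_nt p (pa_delta A p a), Term a) \<in> pa_rules A q"
| pa_rule_seq: "\<lbrakk>p \<in> pa_states A; p' \<in> pa_states A; p'' \<in> pa_states A\<rbrakk> \<Longrightarrow>
    (pair_nt p p', GSeq (NT (pair_nt p p'')) (NT (pair_nt p'' p'))) \<in> pa_rules A q"
| pa_rule_par: "\<lbrakk>p \<in> pa_states A; r \<in> pa_states A; s \<in> pa_states A; r' \<in> pa_final A; s' \<in> pa_final A\<rbrakk> \<Longrightarrow>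
    (pair_nt p (pa_gamma A p r s), GPar (NT (pair_nt r r')) (NT (pair_nt s s'))) \<in> pa_rules A q"
| pa_rule_start: "q' \<in> pa_final A \<Longrightarrow> (0, NT (pair_nt q q')) \<in> pa_rules A q"

fun pa_realises :: "'a pa \<Rightarrow> nat \<Rightarrow> ('a, nat) gterm \<Rightarrow> 'a pomset \<Rightarrow> bool" where
  "pa_realises A q (NT X) U \<longleftrightarrow>
     (\<forall>p p'. X = pair_nt p p' \<longrightarrow> pa_trace A p U p') \<and> (X = 0 \<longrightarrow> U \<in> pa_lang A q)"
| "pa_realises A q (Term a) U \<longleftrightarrow> U = pom_prim a"
| "pa_realises A q Eps U \<longleftrightarrow> U = pom_one"
| "pa_realises A q (GSeq s t) U \<longleftrightarrow>
     (\<exists>V W. U = pom_seq V W \<and> pa_realises A q s V \<and> pa_realises A q t W)"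
| "pa_realises A q (GPar s t) U \<longleftrightarrow>
     (\<exists>V W. U = pom_par V W \<and> pa_realises A q s V \<and> pa_realises A q t W)"

lemma generates_pa_rules_realises:
  "generates (pa_rules A q) t U \<Longrightarrow> pa_realises A q t U"
proof (induction rule: generates.induct)
  case (generates_NT X t U)
  from generates_NT(1) show ?case
    using generates_NT(3) by cases (auto intro: pa_trace.intros simp: pa_lang_def)
qed auto

lemma pa_trace_generates:
  assumes "is_pa A"
  shows "pa_trace A p U p' \<Longrightarrow> generates (pa_rules A q) (NT (pair_nt p p')) U"
proof (induction rule: pa_trace.induct)
  case (tr_one p)
  then have "(pair_nt p p, Eps) \<in> pa_rules A q"
    by (rule pa_rule_one)
  then show ?case by (rule generates_NT) (rule generates_Eps)
next
  case (tr_prim p a)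
  then have "(pair_nt p (pa_delta A p a), Term a) \<in> pa_rules A q"
    by (rule pa_rule_prim)
  then show ?case by (rule generates_NT) (rule generates_Term)
next
  case (tr_seq p U p'' V p')
  then have "p \<in> pa_states A" "p' \<in> pa_states A" "p'' \<in> pa_states A"
    using pa_trace_states assms by blast+
  then have "(pair_nt p p', GSeq (NT (pair_nt p p'')) (NT (pair_nt p'' p'))) \<in> pa_rules A q"
    by (rule pa_rule_seq)
  then show ?case by (rule generates_NT) (rule generates_GSeq[OF tr_seq.IH])
next
  case (tr_par p r U r' s V s')
  then have "r \<in> pa_states A" "s \<in> pa_states A"
    using pa_trace_states assms by blast+
  with tr_par.hyps have
    "(pair_nt p (pa_gamma A p r s), GPar (NT (pair_nt r r')) (NT (pair_nt s s'))) \<in> pa_rules A q"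
    by (intro pa_rule_par)
  then show ?case by (rule generates_NT) (rule generates_GPar[OF tr_par.IH])
qed

definition pa_nonterminals :: "'a pa \<Rightarrow> nat set" where
  "pa_nonterminals A = insert 0 {pair_nt p p' | p p'. p \<in> pa_states A \<and> p' \<in> pa_states A}"

lemma pa_rules_subset:
  assumes "is_pa A" "q \<in> pa_states A"
  defines "N \<equiv> pa_nonterminals A"
  shows "pa_rules A q \<subseteq> N \<times> ({Eps} \<union> range Term \<union> NT ` N
    \<union> {GSeq (NT X) (NT Y) | X Y. X \<in> N \<and> Y \<in> N} \<union> {GPar (NT X) (NT Y) | X Y. X \<in> N \<and> Y \<in> N})"
proof -
  have "\<And>p. p \<in> pa_final A \<Longrightarrow> p \<in> pa_states A"
    "\<And>p a. p \<in> pa_states A \<Longrightarrow> pa_delta A p a \<in> pa_states A"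
    "\<And>p r s. \<lbrakk>p \<in> pa_states A; r \<in> pa_states A; s \<in> pa_states A\<rbrakk> \<Longrightarrow> pa_gamma A p r s \<in> pa_states A"
    using assms(1) by (auto simp: is_pa_def)
  then show ?thesis
    using assms(2) by (auto elim!: pa_rules.cases simp: N_def pa_nonterminals_def)
qed

lemma is_grammar_pa_rules:
  fixes A :: "'a::finite pa"
  assumes "finite_pa A" "q \<in> pa_states A"
  shows "is_grammar (pa_nonterminals A, 0, pa_rules A q)"
proof -
  let ?N = "pa_nonterminals A"
  let ?T = "{Eps} \<union> range Term \<union> NT ` ?N \<union> {GSeq (NT X) (NT Y) | X Y. X \<in> ?N \<and> Y \<in> ?N}
    \<union> {GPar (NT X) (NT Y) | X Y. X \<in> ?N \<and> Y \<in> ?N} :: ('a, nat) gterm set"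
  have A: "is_pa A" "finite (pa_states A)"
    using assms(1) by (auto simp: finite_pa_def)
  then have "finite ?N"
    by (simp add: pa_nonterminals_def finite_image_set2)
  moreover have "finite ?T"
    using \<open>finite ?N\<close> by (auto intro: finite_image_set2)
  moreover have "pa_rules A q \<subseteq> ?N \<times> ?T"
    using A(1) assms(2) by (rule pa_rules_subset)
  moreover have "\<forall>t\<in>?T. nts t \<subseteq> ?N" "0 \<in> ?N"
    by (auto simp: pa_nonterminals_def)
  ultimately show ?thesis
    unfolding is_grammar_def by (auto intro: finite_subset)
qed

lemma pa_lang_context_free:
  fixes A :: "'a::finite pa"
  assumes "finite_pa A" "q \<in> pa_states A"
  shows "context_free (pa_lang A q)"
proof -
  have "is_pa A"
    using assms(1) by (simp add: finite_pa_def)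
  have "U \<in> pa_lang A q \<longleftrightarrow> generates (pa_rules A q) (NT 0) U" for U
  proof
    assume "U \<in> pa_lang A q"
    then obtain q' where q': "q' \<in> pa_final A" "pa_trace A q U q'"
      by (auto simp: pa_lang_def)
    from q'(1) have "(0, NT (pair_nt q q')) \<in> pa_rules A q"
      by (rule pa_rule_start)
    then show "generates (pa_rules A q) (NT 0) U"
      by (rule generates_NT) (rule pa_trace_generates[OF \<open>is_pa A\<close> q'(2)])
  next
    assume "generates (pa_rules A q) (NT 0) U"
    then show "U \<in> pa_lang A q"
      using generates_pa_rules_realises by fastforce
  qed
  then have "pa_lang A q = grammar_lang (pa_nonterminals A, 0, pa_rules A q)"
    by (auto simp: grammar_lang_eq)
  then show ?thesis
    using is_grammar_pa_rules[OF assms] unfolding context_free_def by blast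
qed

section \<open>From grammars to pomset automata\<close>

instance gterm :: (countable, countable) countable
  by countable_datatype

type_synonym 'a stack = "('a, nat) gterm list option"

fun stack_delta :: "'a stack \<Rightarrow> 'a \<Rightarrow> 'a stack" where
  "stack_delta (Some (Term b # ts)) a = (if a = b then Some ts else None)"
| "stack_delta _ _ = None"

text \<open>Every head other than a letter is consumed by a fork: \<open>\<epsilon>\<close> and \<open>t\<^sub>1 \<cdot> t\<^sub>2\<close> by the
  trivial fork \<open>1 \<parallel> 1\<close>, a non-terminal \<open>X\<close> by a fork \<open>U \<parallel> 1\<close> whose left branch
  derives \<open>U\<close> from the body of a rule for \<open>X\<close>.\<close>

fun stack_gamma :: "(nat \<times> ('a, nat) gterm) set \<Rightarrow> 'a stack \<Rightarrow> 'a stack \<Rightarrow> 'a stack \<Rightarrow> 'a stack" where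
  "stack_gamma R (Some (Eps # ts)) r s =
     (if r = Some [] \<and> s = Some [] then Some ts else None)"
| "stack_gamma R (Some (GSeq t1 t2 # ts)) r s =
     (if r = Some [] \<and> s = Some [] then Some (t1 # t2 # ts) else None)"
| "stack_gamma R (Some (NT X # ts)) r s =
     (if s = Some [] \<and> (\<exists>t. r = Some [t] \<and> (X, t) \<in> R) then Some ts else None)"
| "stack_gamma R (Some (GPar t1 t2 # ts)) r s =
     (if r = Some [t1] \<and> s = Some [t2] then Some ts else None)"
| "stack_gamma R _ _ _ = None"

fun subterms :: "('a, 'n) gterm \<Rightarrow> ('a, 'n) gterm set" where
  "subterms (GSeq s t) = insert (GSeq s t) (subterms s \<union> subterms t)"
| "subterms (GPar s t) = insert (GPar s t) (subterms s \<union> subterms t)"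
| "subterms t = {t}"

lemma subterms_refl: "t \<in> subterms t"
  by (cases t) auto

lemma finite_subterms: "finite (subterms t)"
  by (induction t) auto

lemma subterms_trans: "u \<in> subterms t \<Longrightarrow> subterms u \<subseteq> subterms t"
  by (induction t) auto

definition grammar_terms :: "(nat \<times> ('a, nat) gterm) set \<Rightarrow> nat \<Rightarrow> ('a, nat) gterm set" where
  "grammar_terms R S = \<Union> (subterms ` insert (NT S) (snd ` R))"

lemma finite_grammar_terms: "finite R \<Longrightarrow> finite (grammar_terms R S)"
  by (simp add: grammar_terms_def finite_subterms)

lemma grammar_terms_NT: "NT S \<in> grammar_terms R S"
  and grammar_terms_rule: "(X, t) \<in> R \<Longrightarrow> t \<in> grammar_terms R S"
  unfolding grammar_terms_def using subterms_refl by force+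

lemma grammar_terms_GSeqD:
    "GSeq t1 t2 \<in> grammar_terms R S \<Longrightarrow> t1 \<in> grammar_terms R S \<and> t2 \<in> grammar_terms R S"
  and grammar_terms_GParD:
    "GPar t1 t2 \<in> grammar_terms R S \<Longrightarrow> t1 \<in> grammar_terms R S \<and> t2 \<in> grammar_terms R S"
  unfolding grammar_terms_def using subterms_trans subterms_refl by fastforce+

text \<open>No transition increases \<open>size_list size\<close> of a stack (replacing \<open>t\<^sub>1 \<cdot> t\<^sub>2\<close> on top
  by \<open>t\<^sub>1, t\<^sub>2\<close> preserves it), so this finite set of stacks is closed under the transitions.\<close>

definition grammar_stacks :: "(nat \<times> ('a, nat) gterm) set \<Rightarrow> nat \<Rightarrow> ('a, nat) gterm list set" where
  "grammar_stacks R S = {ts. set ts \<subseteq> grammar_terms R S \<and>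
     size_list size ts \<le> Suc (Max (size ` grammar_terms R S))}"

lemma grammar_stacks_Nil: "[] \<in> grammar_stacks R S"
  by (simp add: grammar_stacks_def)

lemma grammar_stacks_single: "finite R \<Longrightarrow> t \<in> grammar_terms R S \<Longrightarrow> [t] \<in> grammar_stacks R S"
  by (simp add: grammar_stacks_def finite_grammar_terms)

lemma grammar_stacks_tl: "t # ts \<in> grammar_stacks R S \<Longrightarrow> ts \<in> grammar_stacks R S"
  by (simp add: grammar_stacks_def)

lemma grammar_stacks_GSeq: "GSeq t1 t2 # ts \<in> grammar_stacks R S \<Longrightarrow> t1 # t2 # ts \<in> grammar_stacks R S"
  using grammar_terms_GSeqD[of t1 t2 R S] by (simp add: grammar_stacks_def)

lemma length_le_size_list: "length xs \<le> size_list f xs"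
  by (induction xs) auto

lemma finite_grammar_stacks: "finite R \<Longrightarrow> finite (grammar_stacks R S)"
proof -
  assume "finite R"
  have "grammar_stacks R S
      \<subseteq> {ts. set ts \<subseteq> grammar_terms R S \<and> length ts \<le> Suc (Max (size ` grammar_terms R S))}"
    unfolding grammar_stacks_def using length_le_size_list le_trans by blast
  then show ?thesis
    using finite_lists_length_le[OF finite_grammar_terms[OF \<open>finite R\<close>]] by (rule finite_subset)
qed

definition stack_states :: "(nat \<times> ('a, nat) gterm) set \<Rightarrow> nat \<Rightarrow> 'a stack set" where
  "stack_states R S = insert None (Some ` grammar_stacks R S)"

lemma stack_delta_stack_states: "x \<in> stack_states R S \<Longrightarrow> stack_delta x a \<in> stack_states R S"
  by (cases "(x, a)" rule: stack_delta.cases) (auto simp: stack_states_def intro: grammar_stacks_tl)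

lemma stack_gamma_stack_states: "x \<in> stack_states R S \<Longrightarrow> stack_gamma R x r s \<in> stack_states R S"
  by (cases "(R, x, r, s)" rule: stack_gamma.cases)
    (auto simp: stack_states_def intro: grammar_stacks_tl grammar_stacks_GSeq)

definition grammar_pa :: "(nat \<times> ('a::countable, nat) gterm) set \<Rightarrow> nat \<Rightarrow> 'a pa" where
  "grammar_pa R S = \<lparr>pa_states = to_nat ` stack_states R S,
     pa_delta = (\<lambda>n a. to_nat (stack_delta (from_nat n) a)),
     pa_gamma = (\<lambda>n r s. to_nat (stack_gamma R (from_nat n) (from_nat r) (from_nat s))),
     pa_final = {to_nat (Some [] :: 'a stack)},
     pa_bot = to_nat (None :: 'a stack),
     pa_top = to_nat (Some [] :: 'a stack)\<rparr>"

lemma grammar_pa_simps [simp]: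
  fixes R :: "(nat \<times> ('a::countable, nat) gterm) set"
  shows "pa_states (grammar_pa R S) = to_nat ` stack_states R S"
    "pa_delta (grammar_pa R S) n a = to_nat (stack_delta (from_nat n) a)"
    "pa_gamma (grammar_pa R S) n r s = to_nat (stack_gamma R (from_nat n) (from_nat r) (from_nat s))"
    "pa_final (grammar_pa R S) = {to_nat (Some [] :: 'a stack)}"
    "pa_bot (grammar_pa R S) = to_nat (None :: 'a stack)"
    "pa_top (grammar_pa R S) = to_nat (Some [] :: 'a stack)"
  by (simp_all add: grammar_pa_def)

lemma Some_in_grammar_pa_states:
  fixes R :: "(nat \<times> ('a::countable, nat) gterm) set"
  shows "ts \<in> grammar_stacks R S \<Longrightarrow> to_nat (Some ts) \<in> pa_states (grammar_pa R S)"
  by (simp add: stack_states_def)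

lemma finite_pa_grammar_pa:
  fixes R :: "(nat \<times> ('a::countable, nat) gterm) set"
  assumes "finite R"
  shows "finite_pa (grammar_pa R S)"
proof -
  have states: "Some [] \<in> stack_states R S" "None \<in> stack_states R S" "finite (stack_states R S)"
    using assms by (simp_all add: stack_states_def grammar_stacks_Nil finite_grammar_stacks)
  show ?thesis
    unfolding finite_pa_def is_pa_def grammar_pa_simps
  proof (intro conjI ballI allI)
    fix n and a :: 'a assume "n \<in> to_nat ` stack_states R S"
    then show "to_nat (stack_delta (from_nat n) a) \<in> to_nat ` stack_states R S"
      by (auto intro: stack_delta_stack_states)
  next
    fix n r s assume "n \<in> to_nat ` stack_states R S"
    then show "to_nat (stack_gamma R (from_nat n) (from_nat r) (from_nat s)) \<in> to_nat ` stack_states R S"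
      by (auto intro: stack_gamma_stack_states)
  qed (use states in auto)
qed

fun stack_lang :: "(nat \<times> ('a, nat) gterm) set \<Rightarrow> ('a, nat) gterm list \<Rightarrow> 'a pomset set" where
  "stack_lang R [] = {pom_one}"
| "stack_lang R (t # ts) = {pom_seq U V | U V. generates R t U \<and> V \<in> stack_lang R ts}"

lemma stack_lang_single [simp]: "stack_lang R [t] = {U. generates R t U}"
  by (auto simp: pom_seq_one_right)

lemma stack_delta_sound:
  assumes "stack_delta (Some ts) a = Some ts'" "W \<in> stack_lang R ts'"
  shows "pom_seq (pom_prim a) W \<in> stack_lang R ts"
proof -
  have "ts = Term a # ts'"
    using assms(1) by (cases "(Some ts, a)" rule: stack_delta.cases) (auto split: if_splits)
  then show ?thesis
    using assms(2) by (auto intro: generates_Term)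
qed

lemma stack_gamma_sound:
  assumes "stack_gamma R (Some ts) (Some rs) (Some ss) = Some ts'"
    and "U \<in> stack_lang R rs" "V \<in> stack_lang R ss" "W \<in> stack_lang R ts'"
  shows "pom_seq (pom_par U V) W \<in> stack_lang R ts"
proof -
  obtain t rest where ts: "ts = t # rest"
    using assms(1) by (cases ts) auto
  show ?thesis
  proof (cases t)
    case (NT X)
    then obtain t' where "(X, t') \<in> R" "rs = [t']" "ss = []" "ts' = rest"
      using assms(1) ts by (auto split: if_splits)
    then show ?thesis
      using assms(2-4) ts NT by (auto simp: pom_seq_one_right pom_par_one_right intro: generates_NT)
  next
    case (Term a)
    then show ?thesis
      using assms(1) ts by simp
  next
    case Eps
    then have "rs = []" "ss = []" "ts' = rest"
      using assms(1) ts by (auto split: if_splits)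
    then show ?thesis
      using assms(2-4) ts Eps by (auto simp: pom_par_one_right intro: generates_Eps)
  next
    case (GSeq t1 t2)
    then have "rs = []" "ss = []" "ts' = t1 # t2 # rest"
      using assms(1) ts by (auto split: if_splits)
    with assms(2-4) obtain A B C where "U = pom_one" "V = pom_one" "W = pom_seq A (pom_seq B C)"
      "generates R t1 A" "generates R t2 B" "C \<in> stack_lang R rest"
      by auto
    then show ?thesis
      using ts GSeq generates_GSeq
      by (fastforce simp: pom_par_one_right pom_seq_one_left simp flip: pom_seq_assoc)
  next
    case (GPar t1 t2)
    then have "rs = [t1]" "ss = [t2]" "ts' = rest"
      using assms(1) ts by (auto split: if_splits)
    then show ?thesis
      using assms(2-4) ts GPar by (auto simp: pom_seq_one_right intro: generates_GPar)
  qed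
qed

lemma grammar_pa_trace_None:
  fixes R :: "(nat \<times> ('a::countable, nat) gterm) set"
  shows "pa_trace (grammar_pa R S) p U p' \<Longrightarrow> from_nat p = (None :: 'a stack) \<Longrightarrow>
    from_nat p' = (None :: 'a stack)"
  by (induction rule: pa_trace.induct) simp_all

lemma grammar_pa_trace_sound:
  fixes R :: "(nat \<times> ('a::countable, nat) gterm) set"
  shows "pa_trace (grammar_pa R S) p U p' \<Longrightarrow> from_nat p = Some ts \<Longrightarrow>
    from_nat p' = (Some ts' :: 'a stack) \<Longrightarrow> W \<in> stack_lang R ts' \<Longrightarrow> pom_seq U W \<in> stack_lang R ts"
proof (induction arbitrary: ts ts' W rule: pa_trace.induct)
  case (tr_one q)
  then show ?case by (simp add: pom_seq_one_left)
next
  case (tr_prim q a)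
  then show ?case by (simp add: stack_delta_sound)
next
  case (tr_seq q U q'' V q')
  obtain ts'' where "from_nat q'' = (Some ts'' :: 'a stack)"
    using grammar_pa_trace_None[OF tr_seq.hyps(2)] tr_seq.prems(2) by fastforce
  then show ?case
    using tr_seq by (simp add: pom_seq_assoc)
next
  case (tr_par q r U r' s V s')
  obtain rs ss where rs: "from_nat r = (Some rs :: 'a stack)"
    and ss: "from_nat s = (Some ss :: 'a stack)"
    using grammar_pa_trace_None[OF tr_par.hyps(2)] grammar_pa_trace_None[OF tr_par.hyps(4)]
      tr_par.hyps(3,5)
    by fastforce
  have "from_nat r' = (Some [] :: 'a stack)" "from_nat s' = (Some [] :: 'a stack)"
    using tr_par.hyps(3,5) by simp_all
  then have "pom_seq U pom_one \<in> stack_lang R rs" "pom_seq V pom_one \<in> stack_lang R ss"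
    using tr_par.IH(1)[OF rs] tr_par.IH(2)[OF ss] by simp_all
  then have "U \<in> stack_lang R rs" "V \<in> stack_lang R ss"
    by (simp_all only: pom_seq_one_right)
  then show ?case
    using tr_par.prems rs ss by (auto intro: stack_gamma_sound)
qed

lemma grammar_pa_trace_top:
  fixes R :: "(nat \<times> ('a::countable, nat) gterm) set"
  shows "pa_trace (grammar_pa R S) (to_nat (Some [] :: 'a stack)) pom_one (to_nat (Some [] :: 'a stack))"
  by (intro tr_one Some_in_grammar_pa_states grammar_stacks_Nil)

lemma grammar_pa_trace_trivial_fork:
  fixes R :: "(nat \<times> ('a::countable, nat) gterm) set"
  assumes "ts \<in> grammar_stacks R S" "stack_gamma R (Some ts) (Some []) (Some []) = Some ts'"
  shows "pa_trace (grammar_pa R S) (to_nat (Some ts)) pom_one (to_nat (Some ts'))"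
proof -
  have "pa_trace (grammar_pa R S) (to_nat (Some ts)) (pom_par pom_one pom_one)
      (pa_gamma (grammar_pa R S) (to_nat (Some ts))
        (to_nat (Some [] :: 'a stack)) (to_nat (Some [] :: 'a stack)))"
    by (rule tr_par[OF Some_in_grammar_pa_states[OF assms(1)] grammar_pa_trace_top _
          grammar_pa_trace_top]) simp_all
  then show ?thesis
    using assms(2) by (simp add: pom_par_one_right)
qed

lemma grammar_pa_trace_complete:
  fixes R :: "(nat \<times> ('a::countable, nat) gterm) set"
  assumes "finite R"
  shows "generates R t U \<Longrightarrow> t # ts \<in> grammar_stacks R S \<Longrightarrow>
    pa_trace (grammar_pa R S) (to_nat (Some (t # ts))) U (to_nat (Some ts))"
proof (induction arbitrary: ts rule: generates.induct)
  case (generates_Term a)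
  then show ?case
    using tr_prim[OF Some_in_grammar_pa_states[OF generates_Term.prems], of a] by simp
next
  case generates_Eps
  then show ?case
    by (rule grammar_pa_trace_trivial_fork) simp
next
  case (generates_GSeq s U t V)
  have "s # t # ts \<in> grammar_stacks R S"
    using generates_GSeq.prems by (rule grammar_stacks_GSeq)
  then have "pa_trace (grammar_pa R S) (to_nat (Some (s # t # ts))) (pom_seq U V) (to_nat (Some ts))"
    using generates_GSeq.IH grammar_stacks_tl by (blast intro: tr_seq)
  with grammar_pa_trace_trivial_fork[OF generates_GSeq.prems]
  have "pa_trace (grammar_pa R S) (to_nat (Some (GSeq s t # ts))) (pom_seq pom_one (pom_seq U V))
      (to_nat (Some ts))"
    by (auto intro: tr_seq)
  then show ?case
    by (simp add: pom_seq_one_left)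
next
  case (generates_GPar s U t V)
  have st: "[s] \<in> grammar_stacks R S" "[t] \<in> grammar_stacks R S"
    using generates_GPar.prems grammar_terms_GParD assms
    by (auto simp: grammar_stacks_def intro: grammar_stacks_single)
  have "pa_trace (grammar_pa R S) (to_nat (Some (GPar s t # ts))) (pom_par U V)
      (pa_gamma (grammar_pa R S) (to_nat (Some (GPar s t # ts)))
        (to_nat (Some [s])) (to_nat (Some [t])))"
    by (rule tr_par[OF Some_in_grammar_pa_states[OF generates_GPar.prems]
          generates_GPar.IH(1)[OF st(1)] _ generates_GPar.IH(2)[OF st(2)]]) simp_all
  then show ?case
    by simp
next
  case (generates_NT X t U)
  have "[t] \<in> grammar_stacks R S"
    using assms generates_NT.hyps(1) by (intro grammar_stacks_single grammar_terms_rule)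
  have "pa_trace (grammar_pa R S) (to_nat (Some (NT X # ts))) (pom_par U pom_one)
      (pa_gamma (grammar_pa R S) (to_nat (Some (NT X # ts)))
        (to_nat (Some [t])) (to_nat (Some [] :: 'a stack)))"
    by (rule tr_par[OF Some_in_grammar_pa_states[OF generates_NT.prems]
          generates_NT.IH[OF \<open>[t] \<in> _\<close>] _ grammar_pa_trace_top]) simp_all
  then show ?case
    using generates_NT.hyps(1) by (simp add: pom_par_one_right)
qed

lemma context_free_pa_lang:
  fixes L :: "'a::countable pomset set"
  assumes "context_free L"
  shows "\<exists>A q. finite_pa A \<and> q \<in> pa_states A \<and> L = pa_lang A q"
proof -
  obtain \<Gamma> S R where G: "is_grammar (\<Gamma>, S, R)" "L = grammar_lang (\<Gamma>, S, R)"
    using assms unfolding context_free_def by auto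
  have "finite R"
    using G(1) by (simp add: is_grammar_def)
  let ?q = "to_nat (Some [NT S] :: 'a stack)"
  have S: "[NT S] \<in> grammar_stacks R S"
    using \<open>finite R\<close> grammar_terms_NT by (rule grammar_stacks_single)
  have "U \<in> pa_lang (grammar_pa R S) ?q \<longleftrightarrow> generates R (NT S) U" for U
  proof
    assume "U \<in> pa_lang (grammar_pa R S) ?q"
    then have "pa_trace (grammar_pa R S) ?q U (to_nat (Some [] :: 'a stack))"
      by (simp add: pa_lang_def)
    then have "pom_seq U pom_one \<in> stack_lang R [NT S]"
      by (rule grammar_pa_trace_sound[where ts' = "[]"]) simp_all
    then show "generates R (NT S) U"
      by (simp add: pom_seq_one_right)
  next
    assume "generates R (NT S) U"
    then show "U \<in> pa_lang (grammar_pa R S) ?q"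
      using grammar_pa_trace_complete[OF \<open>finite R\<close> _ S] by (simp add: pa_lang_def)
  qed
  then have "L = pa_lang (grammar_pa R S) ?q"
    using G(2) by (auto simp: grammar_lang_eq)
  moreover have "?q \<in> pa_states (grammar_pa R S)"
    using S by (rule Some_in_grammar_pa_states)
  ultimately show ?thesis
    using finite_pa_grammar_pa[OF \<open>finite R\<close>] by blast
qed

theorem mainTheorem3:
  fixes U :: "('a::finite) pomset set"
  assumes "U \<subseteq> sp_pomsets"
  shows "(\<exists>A q. finite_pa A \<and> q \<in> pa_states A \<and> U = pa_lang A q) \<longleftrightarrow> context_free U"
  using pa_lang_context_free context_free_pa_lang by blast

end
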